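(* For any samples $(X_i,y_i)_{i=1}^n$ with $X_i\in\mathbb{R}^d$, $y_i\in\mathbb{R}$, and any $k\ge 0$, it holds that $\mathrm{Stability}(X,y)\le k$ if and only if $$\exists\lambda\in\mathbb{R}^{d-1}:\ \forall u\in\mathbb{R}^d:\ \exists w\in[0,1]^n:\ \|w\|_1\ge n-k \ \wedge\ \sum_{i=1}^n w_i(\langle\tilde X_i,\lambda\rangle - y_i)\langle X_i,u\rangle\ge 0.$$
   Context: For $w\in[0,1]^n$, $\mathrm{OLS}(X,y,w) := \arg\min_{\beta\in\mathbb{R}^d}\frac1n\sum_{i=1}^n w_i(\langle X_i,\beta\rangle - y_i)^2$, and $\mathrm{Stability}(X,y) := \inf_{w\in[0,1]^n,\ \beta\in\mathbb{R}^d}\{\, n-\|w\|_1 : \beta_1 = 0 \text{ and } \beta\in \mathrm{OLS}(X,y,w)\}$. $\tilde X_i\in\mathbb{R}^{d-1}$ denotes the vector of coordinates $2,\dots,d$ of $X_i$ (i.e. the $i$-th row of the $n\times(d-1)$ matrix $\tilde X$ whose columns are columns $2,\dots,d$ of the matrix $X$ with rows $X_i$). *)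

theory Defs
  imports "HOL-Analysis.Analysis" "HOL-Library.Extended_Real"
begin

text \<open>Row i (i < n) of the design matrix is
  X i :: nat \<Rightarrow> real, with coordinates j < d (0-indexed, so coordinate 0
  is the paper's coordinate 1). Vectors in R^m are functions nat \<Rightarrow> real
  that vanish outside {..<m}.\<close>

definition vecs :: "nat \<Rightarrow> (nat \<Rightarrow> real) set" where
  "vecs m = {v. \<forall>j\<ge>m. v j = 0}"

definition ip :: "nat \<Rightarrow> (nat \<Rightarrow> real) \<Rightarrow> (nat \<Rightarrow> real) \<Rightarrow> real" where
  "ip m a b = (\<Sum>j<m. a j * b j)"

definition weights :: "nat \<Rightarrow> (nat \<Rightarrow> real) set" where
  "weights n = {w. (\<forall>i<n. 0 \<le> w i \<and> w i \<le> 1) \<and> (\<forall>i\<ge>n. w i = 0)}"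

definition wloss :: "nat \<Rightarrow> nat \<Rightarrow> (nat \<Rightarrow> nat \<Rightarrow> real) \<Rightarrow> (nat \<Rightarrow> real)
    \<Rightarrow> (nat \<Rightarrow> real) \<Rightarrow> (nat \<Rightarrow> real) \<Rightarrow> real" where
  "wloss n d X y w \<beta> = (1 / real n) * (\<Sum>i<n. w i * (ip d (X i) \<beta> - y i)\<^sup>2)"

definition OLS :: "nat \<Rightarrow> nat \<Rightarrow> (nat \<Rightarrow> nat \<Rightarrow> real) \<Rightarrow> (nat \<Rightarrow> real)
    \<Rightarrow> (nat \<Rightarrow> real) \<Rightarrow> (nat \<Rightarrow> real) set" where
  "OLS n d X y w = {\<beta> \<in> vecs d. \<forall>\<beta>' \<in> vecs d. wloss n d X y w \<beta> \<le> wloss n d X y w \<beta>'}"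

text \<open>Stability, as an extended real (infimum of the empty set is +\<infinity>).\<close>
definition Stability :: "nat \<Rightarrow> nat \<Rightarrow> (nat \<Rightarrow> nat \<Rightarrow> real) \<Rightarrow> (nat \<Rightarrow> real) \<Rightarrow> ereal" where
  "Stability n d X y = Inf {ereal (real n - (\<Sum>i<n. w i)) | w \<beta>.
      w \<in> weights n \<and> \<beta> \<in> vecs d \<and> \<beta> 0 = 0 \<and> \<beta> \<in> OLS n d X y w}"

definition Xtilde :: "nat \<Rightarrow> (nat \<Rightarrow> nat \<Rightarrow> real) \<Rightarrow> nat \<Rightarrow> nat \<Rightarrow> real" where
  "Xtilde d X i = (\<lambda>j. if j < d - 1 then X i (Suc j) else 0)"

end

theory Submission
  imports Defs
begin

text \<open>By the first-order condition, \<beta> \<in> OLS(X,y,w) iff the weighted gradient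
  \<Sum>i. w i (\<langle>X i,\<beta>\<rangle> - y i) X i vanishes.

  Sufficiency: for \<beta> = (0,\<lambda>), the gradients over the admissible weights
  {w. \<parallel>w\<parallel>1 \<ge> n - k} form a compact convex set which meets every half-space
  {c. \<langle>u,c\<rangle> \<ge> 0}; its point of minimal norm must then be 0, so some admissible
  weight makes (0,\<lambda>) optimal.

  Necessity: take feasible weights w m with n - \<parallel>w m\<parallel>1 < k + 1/m and a limit
  point l, so \<parallel>l\<parallel>1 \<ge> n - k. A least squares solution (0,\<lambda>) of the problem with
  weight l restricted to \<beta> 1 = 0 is optimal for l among all \<beta>: the restricted
  minimum is lower semicontinuous in the weight (the weights w m eventually dominate
  z l for every z < 1), while the loss at a fixed \<beta> is continuous. Its gradient
  is then 0.\<close>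

section \<open>Compactness and convexity\<close>

lemma weights_nonneg: "w \<in> weights n \<Longrightarrow> 0 \<le> w i"
  by (cases "i < n") (auto simp: weights_def)

lemma weights_eq_PiE: "weights n = (\<Pi>\<^sub>E i\<in>UNIV. if i < n then {0..1} else {0})"
  unfolding weights_def by (rule set_eqI) (simp add: PiE_iff if_split_mem2 all_conj_distrib not_less)

lemma continuous_on_coordinate [continuous_intros]:
  "continuous_on S (\<lambda>x::'a \<Rightarrow> 'b::topological_space. x i)"
  by (rule continuous_on_subset[OF continuous_on_product_coordinates]) simp

lemma tendsto_coordinate:
  "(f \<longlongrightarrow> l) F \<Longrightarrow> ((\<lambda>m. (f m :: 'a \<Rightarrow> 'b::topological_space) i) \<longlongrightarrow> l i) F"
  by (rule continuous_on_tendsto_compose[OF continuous_on_product_coordinates]) auto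

lemma compact_weights: "compact (weights n)"
proof -
  have "compactin (product_topology (\<lambda>_. euclidean) UNIV)
      (\<Pi>\<^sub>E i\<in>UNIV. if i < n then {0..1::real} else {0})"
    by (subst compactin_PiE) (auto simp: compactin_euclidean_iff)
  then show ?thesis
    by (simp only: weights_eq_PiE euclidean_product_topology compactin_euclidean_iff)
qed

lemma compact_weights_sum_ge: "compact {w \<in> weights n. c \<le> (\<Sum>i<n. w i)}"
proof -
  have "continuous_on UNIV (\<lambda>w::nat \<Rightarrow> real. \<Sum>i<n. w i)"
    by (rule continuous_on_sum) (rule continuous_on_coordinate)
  then have "closed {w::nat \<Rightarrow> real. c \<le> (\<Sum>i<n. w i)}"
    by (rule closed_Collect_le[OF continuous_on_const])
  then have "compact (weights n \<inter> {w. c \<le> (\<Sum>i<n. w i)})"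
    by (rule compact_Int_closed[OF compact_weights])
  then show ?thesis
    by (simp only: Collect_conj_eq Collect_mem_eq)
qed

(* Stands in for convex, which needs a real_vector instance that nat \<Rightarrow> real lacks. *)
definition pointwise_convex :: "('a \<Rightarrow> real) set \<Rightarrow> bool" where
  "pointwise_convex C \<longleftrightarrow>
     (\<forall>a\<in>C. \<forall>b\<in>C. \<forall>t. 0 \<le> t \<and> t \<le> 1 \<longrightarrow> (\<lambda>j. a j + t * (b j - a j)) \<in> C)"

lemma pointwise_convex_weights_sum_ge:
  "pointwise_convex {w \<in> weights n. c \<le> (\<Sum>i<n. w i)}"
  unfolding pointwise_convex_def
proof (intro ballI allI impI)
  fix a b and t :: real
  assume a: "a \<in> {w \<in> weights n. c \<le> (\<Sum>i<n. w i)}"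
    and b: "b \<in> {w \<in> weights n. c \<le> (\<Sum>i<n. w i)}" and t: "0 \<le> t \<and> t \<le> 1"
  have comb: "a j + t * (b j - a j) = (1 - t) * a j + t * b j" for j
    by (simp add: algebra_simps)
  have "0 \<le> a j + t * (b j - a j) \<and> a j + t * (b j - a j) \<le> 1" if "j < n" for j
    using a b t that unfolding comb weights_def by (simp add: convex_bound_le)
  moreover have "c \<le> (\<Sum>i<n. a i + t * (b i - a i))"
  proof -
    have "c = (1 - t) * c + t * c" by (simp add: algebra_simps)
    also have "\<dots> \<le> (1 - t) * (\<Sum>i<n. a i) + t * (\<Sum>i<n. b i)"
      using a b t by (intro add_mono mult_left_mono) auto
    also have "\<dots> = (\<Sum>i<n. a i + t * (b i - a i))"
      unfolding comb by (simp add: sum.distrib sum_distrib_left)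
    finally show ?thesis .
  qed
  ultimately show "(\<lambda>j. a j + t * (b j - a j)) \<in> {w \<in> weights n. c \<le> (\<Sum>i<n. w i)}"
    using a b by (auto simp: weights_def)
qed

lemma zero_mem_if_meets_all_halfspaces:
  fixes C :: "(nat \<Rightarrow> real) set"
  assumes "compact C" and convex: "pointwise_convex C"
    and meets: "\<forall>u\<in>vecs d. \<exists>c\<in>C. 0 \<le> ip d u c"
  shows "\<exists>c\<in>C. \<forall>j<d. c j = 0"
proof -
  have "(\<lambda>_. 0) \<in> vecs d" by (simp add: vecs_def)
  then have "C \<noteq> {}" using meets by blast
  moreover have "continuous_on C (\<lambda>c. ip d c c)"
    unfolding ip_def by (intro continuous_intros)
  ultimately obtain c0 where c0: "c0 \<in> C" "\<And>c. c \<in> C \<Longrightarrow> ip d c0 c0 \<le> ip d c c"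
    using continuous_attains_inf[OF \<open>compact C\<close>] by blast
  \<comment> \<open>c0 is the point of minimal norm; if it were nonzero, moving from c0 towards a point
    of the half-space opposite to c0 would decrease the norm.\<close>
  have "ip d c0 c0 = 0"
  proof (rule ccontr)
    define a where "a = ip d c0 c0"
    assume "ip d c0 c0 \<noteq> 0"
    moreover have "0 \<le> a" unfolding a_def ip_def by (intro sum_nonneg) simp
    ultimately have a_pos: "0 < a" by (simp add: a_def)
    have "(\<lambda>j. if j < d then - c0 j else 0) \<in> vecs d" by (simp add: vecs_def)
    then obtain c1 where c1: "c1 \<in> C" "0 \<le> ip d (\<lambda>j. if j < d then - c0 j else 0) c1"
      using meets by blast
    define P where "P = ip d c0 c1"
    have P: "P \<le> 0"
      using c1(2) by (simp add: P_def ip_def sum_negf)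
    define D where "D = ip d (\<lambda>j. c1 j - c0 j) (\<lambda>j. c1 j - c0 j)"
    have D: "0 \<le> D" unfolding D_def ip_def by (intro sum_nonneg) simp
    define t where "t = a / (a + D)"
    have t: "0 < t" "t \<le> 1" "t * D \<le> a"
      using a_pos D by (auto simp: t_def field_simps)
    define ct where "ct j = c0 j + t * (c1 j - c0 j)" for j
    have "ct \<in> C"
      using convex c0(1) c1(1) t unfolding pointwise_convex_def ct_def by auto
    have "ip d ct ct = (\<Sum>j<d. (c0 j)\<^sup>2 + 2 * t * (c0 j * c1 j - (c0 j)\<^sup>2) + t\<^sup>2 * (c1 j - c0 j)\<^sup>2)"
      unfolding ip_def ct_def by (rule sum.cong) (simp_all add: power2_eq_square algebra_simps)
    also have "\<dots> = a + 2 * t * (P - a) + t\<^sup>2 * D"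
      unfolding a_def P_def D_def ip_def
      by (simp add: sum.distrib sum_distrib_left sum_subtractf right_diff_distrib power2_eq_square)
    also have "\<dots> < a"
    proof -
      have "t\<^sup>2 * D \<le> t * a" using t by (simp add: power2_eq_square mult.assoc)
      moreover have "t * P \<le> 0" using t P by (simp add: mult_nonneg_nonpos)
      moreover have "0 < t * a" using t a_pos by simp
      ultimately show ?thesis by (simp add: algebra_simps)
    qed
    finally have "ip d ct ct < ip d c0 c0" by (simp add: a_def)
    with c0(2)[OF \<open>ct \<in> C\<close>] show False by simp
  qed
  then have "\<forall>j<d. c0 j = 0"
    unfolding ip_def by (subst (asm) sum_nonneg_eq_0_iff) auto
  with c0(1) show ?thesis by blast
qed

section \<open>Least squares\<close>

lemma ip_Suc: "ip (Suc m) a b = ip m a b + a m * b m"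
  by (simp add: ip_def)

lemma ip_add_scaled: "ip m a (\<lambda>j. b j + t * c j) = ip m a b + t * ip m a c"
  unfolding ip_def by (simp add: algebra_simps sum.distrib sum_distrib_left)

lemma sum_mult_ip: "(\<Sum>i<n. c i * ip d (X i) u) = ip d u (\<lambda>j. \<Sum>i<n. c i * X i j)"
  unfolding ip_def by (simp add: sum_distrib_left sum.swap[of _ "{..<n}"] algebra_simps)

definition prepend_zero :: "(nat \<Rightarrow> real) \<Rightarrow> nat \<Rightarrow> real" where
  "prepend_zero lam = (\<lambda>j. if j = 0 then 0 else lam (j - 1))"

lemma prepend_zero_vecs: "lam \<in> vecs (d - 1) \<Longrightarrow> prepend_zero lam \<in> vecs d"
  by (auto simp: vecs_def prepend_zero_def)

lemma tail_vecs: "b \<in> vecs d \<Longrightarrow> (\<lambda>j. b (Suc j)) \<in> vecs (d - 1)"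
  by (simp add: vecs_def)

lemma ip_split_first:
  assumes "d \<ge> 1"
  shows "ip d (X i) b = X i 0 * b 0 + ip (d - 1) (Xtilde d X i) (\<lambda>j. b (Suc j))"
proof -
  have "ip d (X i) b = (\<Sum>j<Suc (d - 1). X i j * b j)"
    unfolding ip_def using assms by simp
  also have "\<dots> = X i 0 * b 0 + (\<Sum>j<d - 1. X i (Suc j) * b (Suc j))"
    by (subst sum.lessThan_Suc_shift) simp
  also have "(\<Sum>j<d - 1. X i (Suc j) * b (Suc j)) = ip (d - 1) (Xtilde d X i) (\<lambda>j. b (Suc j))"
    unfolding ip_def Xtilde_def by (rule sum.cong) auto
  finally show ?thesis .
qed

lemma ip_prepend_zero: "d \<ge> 1 \<Longrightarrow> ip d (X i) (prepend_zero lam) = ip (d - 1) (Xtilde d X i) lam"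
  by (subst ip_split_first) (auto simp: prepend_zero_def)

lemma sum_sq_line_min:
  fixes p \<alpha> :: "nat \<Rightarrow> real"
  assumes A: "A = (\<Sum>i<N. (\<alpha> i)\<^sup>2)" "A > 0"
  shows "(\<Sum>i<N. (p i - \<alpha> i * ((\<Sum>k<N. \<alpha> k * p k) / A))\<^sup>2) \<le> (\<Sum>i<N. (p i + \<alpha> i * t)\<^sup>2)"
proof -
  define P where "P = (\<Sum>k<N. \<alpha> k * p k)"
  define Q where "Q = (\<Sum>k<N. (p k)\<^sup>2)"
  have expand: "(\<Sum>i<N. (p i + \<alpha> i * s)\<^sup>2) = Q + 2 * s * P + s\<^sup>2 * A" for s
    unfolding Q_def P_def A(1)
    by (simp add: power2_eq_square algebra_simps sum.distrib sum_distrib_left sum_distrib_right)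
  have "Q + 2 * (- P / A) * P + (- P / A)\<^sup>2 * A + (A * t + P)\<^sup>2 / A = Q + 2 * t * P + t\<^sup>2 * A"
    using A(2) by (simp add: field_simps power2_eq_square)
  moreover have "(A * t + P)\<^sup>2 / A \<ge> 0" using A(2) by simp
  ultimately show ?thesis
    using expand[of t] expand[of "- P / A"] unfolding P_def[symmetric] by (simp add: algebra_simps)
qed

lemma ip_project_out:
  "ip m (\<lambda>j. a i j - \<alpha> i * (\<Sum>k<N. \<alpha> k * a k j) / A) mu - (c i - \<alpha> i * (\<Sum>k<N. \<alpha> k * c k) / A)
   = (ip m (a i) mu - c i) - \<alpha> i * ((\<Sum>k<N. \<alpha> k * (ip m (a k) mu - c k)) / A)"
proof -
  have "ip m (\<lambda>j. a i j - \<alpha> i * (\<Sum>k<N. \<alpha> k * a k j) / A) mu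
      = (\<Sum>j<m. a i j * mu j - \<alpha> i / A * ((\<Sum>k<N. \<alpha> k * a k j) * mu j))"
    unfolding ip_def by (rule sum.cong) (simp_all add: algebra_simps)
  also have "\<dots> = ip m (a i) mu - \<alpha> i / A * (\<Sum>j<m. (\<Sum>k<N. \<alpha> k * a k j) * mu j)"
    unfolding ip_def by (simp add: sum_subtractf sum_distrib_left)
  also have "(\<Sum>j<m. (\<Sum>k<N. \<alpha> k * a k j) * mu j) = (\<Sum>k<N. \<alpha> k * ip m (a k) mu)"
    unfolding ip_def
    by (simp add: sum_distrib_left sum_distrib_right mult.assoc sum.swap[of _ "{..<m}"])
  finally show ?thesis
    by (simp add: algebra_simps sum_subtractf sum_distrib_left sum_divide_distrib diff_divide_distrib)
qed

lemma least_squares_attains_min: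
  fixes N :: nat
  shows "\<exists>lam\<in>vecs m. \<forall>mu. (\<Sum>i<N. (ip m (a i) lam - c i)\<^sup>2) \<le> (\<Sum>i<N. (ip m (a i) mu - c i)\<^sup>2)"
proof (induction m arbitrary: a c)
  case 0
  show ?case by (rule bexI[of _ "\<lambda>_. 0"]) (auto simp: ip_def vecs_def)
next
  case (Suc m)
  define \<alpha> where "\<alpha> i = a i m" for i
  define A where "A = (\<Sum>i<N. (\<alpha> i)\<^sup>2)"
  show ?case
  proof (cases "A = 0")
    case True
    then have "\<alpha> i = 0" if "i < N" for i
      using that sum_nonneg_eq_0_iff[of "{..<N}" "\<lambda>i. (\<alpha> i)\<^sup>2"] by (auto simp: A_def)
    then have ip_eq: "ip (Suc m) (a i) mu = ip m (a i) mu" if "i < N" for i mu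
      using that by (simp add: ip_Suc \<alpha>_def)
    obtain lam where "lam \<in> vecs m"
      and "\<forall>mu. (\<Sum>i<N. (ip m (a i) lam - c i)\<^sup>2) \<le> (\<Sum>i<N. (ip m (a i) mu - c i)\<^sup>2)"
      using Suc.IH by blast
    then show ?thesis
      by (intro bexI[of _ lam]) (auto simp: vecs_def ip_eq)
  next
    case False
    then have A_pos: "A > 0"
      using sum_nonneg[of "{..<N}" "\<lambda>i. (\<alpha> i)\<^sup>2"] by (simp add: A_def)
    \<comment> \<open>Eliminate coordinate m: project the columns and the target onto the complement of \<alpha>.\<close>
    define a' where "a' i = (\<lambda>j. a i j - \<alpha> i * (\<Sum>k<N. \<alpha> k * a k j) / A)" for i
    define c' where "c' i = c i - \<alpha> i * (\<Sum>k<N. \<alpha> k * c k) / A" for i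
    have proj: "ip m (a' i) mu - c' i = (ip m (a i) mu - c i)
        - \<alpha> i * ((\<Sum>k<N. \<alpha> k * (ip m (a k) mu - c k)) / A)" for i mu
      unfolding a'_def c'_def by (rule ip_project_out)
    obtain lam' where lam': "lam' \<in> vecs m"
      "\<And>mu. (\<Sum>i<N. (ip m (a' i) lam' - c' i)\<^sup>2) \<le> (\<Sum>i<N. (ip m (a' i) mu - c' i)\<^sup>2)"
      using Suc.IH by blast
    define s where "s = (\<Sum>k<N. \<alpha> k * (ip m (a k) lam' - c k)) / A"
    define lam where "lam = lam'(m := - s)"
    have ip_lam: "ip (Suc m) (a i) lam = ip m (a i) lam' + \<alpha> i * (- s)" for i
    proof -
      have "ip m (a i) lam = ip m (a i) lam'"
        unfolding ip_def lam_def by (rule sum.cong) auto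
      then show ?thesis by (simp add: ip_Suc \<alpha>_def lam_def)
    qed
    have "(\<Sum>i<N. (ip (Suc m) (a i) lam - c i)\<^sup>2) \<le> (\<Sum>i<N. (ip (Suc m) (a i) mu - c i)\<^sup>2)" for mu
    proof -
      have "(\<Sum>i<N. (ip (Suc m) (a i) lam - c i)\<^sup>2) = (\<Sum>i<N. (ip m (a' i) lam' - c' i)\<^sup>2)"
        by (simp add: ip_lam proj s_def algebra_simps)
      also have "\<dots> \<le> (\<Sum>i<N. (ip m (a' i) mu - c' i)\<^sup>2)"
        by (rule lam'(2))
      also have "\<dots> \<le> (\<Sum>i<N. ((ip m (a i) mu - c i) + \<alpha> i * mu m)\<^sup>2)"
        unfolding proj by (rule sum_sq_line_min[OF A_def A_pos])
      also have "\<dots> = (\<Sum>i<N. (ip (Suc m) (a i) mu - c i)\<^sup>2)"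
        by (simp add: ip_Suc \<alpha>_def algebra_simps)
      finally show ?thesis .
    qed
    moreover have "lam \<in> vecs (Suc m)"
      using lam'(1) by (simp add: vecs_def lam_def)
    ultimately show ?thesis by blast
  qed
qed

definition wrss :: "nat \<Rightarrow> nat \<Rightarrow> (nat \<Rightarrow> nat \<Rightarrow> real) \<Rightarrow> (nat \<Rightarrow> real)
    \<Rightarrow> (nat \<Rightarrow> real) \<Rightarrow> (nat \<Rightarrow> real) \<Rightarrow> real" where
  "wrss n d X y w \<beta> = (\<Sum>i<n. w i * (ip d (X i) \<beta> - y i)\<^sup>2)"

lemma OLS_eq_wrss_min:
  "OLS n d X y w = {\<beta> \<in> vecs d. \<forall>\<beta>'\<in>vecs d. wrss n d X y w \<beta> \<le> wrss n d X y w \<beta>'}"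
proof (cases "n = 0")
  case True
  then show ?thesis by (simp add: OLS_def wloss_def wrss_def)
next
  case False
  then show ?thesis
    by (simp add: OLS_def wloss_def wrss_def divide_le_cancel)
qed

lemma OLS_nonempty:
  assumes "\<forall>i<n. 0 \<le> w i"
  shows "\<exists>\<beta>. \<beta> \<in> OLS n d X y w"
proof -
  have scaled: "(ip d (\<lambda>j. sqrt (w i) * X i j) \<beta> - sqrt (w i) * y i)\<^sup>2
      = w i * (ip d (X i) \<beta> - y i)\<^sup>2" if "i < n" for i \<beta>
  proof -
    have "ip d (\<lambda>j. sqrt (w i) * X i j) \<beta> - sqrt (w i) * y i = sqrt (w i) * (ip d (X i) \<beta> - y i)"
      unfolding ip_def by (simp add: sum_distrib_left mult.assoc right_diff_distrib)
    then show ?thesis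
      using assms that by (simp add: power_mult_distrib)
  qed
  obtain \<beta> where "\<beta> \<in> vecs d" and "\<forall>\<beta>'. (\<Sum>i<n. (ip d (\<lambda>j. sqrt (w i) * X i j) \<beta> - sqrt (w i) * y i)\<^sup>2)
      \<le> (\<Sum>i<n. (ip d (\<lambda>j. sqrt (w i) * X i j) \<beta>' - sqrt (w i) * y i)\<^sup>2)"
    using least_squares_attains_min[where m = d and N = n and a = "\<lambda>i j. sqrt (w i) * X i j"
        and c = "\<lambda>i. sqrt (w i) * y i"] by blast
  then have "\<beta> \<in> OLS n d X y w"
    by (simp add: OLS_eq_wrss_min wrss_def scaled)
  then show ?thesis by blast
qed

lemma wrss_add_scaled:
  "wrss n d X y w (\<lambda>j. b j + t * u j) = wrss n d X y w b
     + 2 * t * (\<Sum>i<n. w i * (ip d (X i) b - y i) * ip d (X i) u)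
     + t\<^sup>2 * (\<Sum>i<n. w i * (ip d (X i) u)\<^sup>2)"
proof -
  have "wrss n d X y w (\<lambda>j. b j + t * u j) = (\<Sum>i<n. w i * (ip d (X i) b - y i)\<^sup>2
      + 2 * t * (w i * (ip d (X i) b - y i) * ip d (X i) u) + t\<^sup>2 * (w i * (ip d (X i) u)\<^sup>2))"
    unfolding wrss_def ip_add_scaled by (rule sum.cong) (simp_all add: power2_eq_square algebra_simps)
  then show ?thesis
    by (simp add: wrss_def sum.distrib sum_distrib_left)
qed

lemma linear_coeff_zero_if_quadratic_nonneg:
  fixes G Q :: real
  assumes "\<And>t. 0 \<le> 2 * t * G + t\<^sup>2 * Q"
  shows "G = 0"
proof -
  define s where "s = \<bar>Q\<bar> + 1"
  have s: "0 < s" "Q \<le> s" by (auto simp: s_def)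
  have "0 \<le> 2 * (- G / s) * G + (- G / s)\<^sup>2 * Q"
    by (rule assms)
  also have "\<dots> \<le> 2 * (- G / s) * G + (- G / s)\<^sup>2 * s"
    using s by (intro add_left_mono mult_left_mono) auto
  also have "\<dots> = - (G\<^sup>2 / s)"
    using s by (simp add: field_simps power2_eq_square)
  finally have "G\<^sup>2 / s \<le> 0" by simp
  then show ?thesis
    using s by (simp add: divide_le_0_iff)
qed

lemma OLS_iff_gradient_zero:
  assumes w: "\<forall>i<n. 0 \<le> w i" and b: "b \<in> vecs d"
  shows "b \<in> OLS n d X y w \<longleftrightarrow>
     (\<forall>u\<in>vecs d. (\<Sum>i<n. w i * (ip d (X i) b - y i) * ip d (X i) u) = 0)"
proof -
  have curv_nonneg: "0 \<le> (\<Sum>i<n. w i * (ip d (X i) u)\<^sup>2)" for u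
    using w by (intro sum_nonneg) auto
  have line_vecs: "(\<lambda>j. b j + t * u j) \<in> vecs d" if "u \<in> vecs d" for u t
    using b that by (auto simp: vecs_def)
  show ?thesis
  proof
    assume "b \<in> OLS n d X y w"
    then have min: "wrss n d X y w b \<le> wrss n d X y w b'" if "b' \<in> vecs d" for b'
      using that by (auto simp: OLS_eq_wrss_min)
    show "\<forall>u\<in>vecs d. (\<Sum>i<n. w i * (ip d (X i) b - y i) * ip d (X i) u) = 0"
    proof
      fix u assume "u \<in> vecs d"
      from min[OF line_vecs[OF this]] show "(\<Sum>i<n. w i * (ip d (X i) b - y i) * ip d (X i) u) = 0"
        unfolding wrss_add_scaled by (intro linear_coeff_zero_if_quadratic_nonneg) simp
    qed
  next
    assume grad: "\<forall>u\<in>vecs d. (\<Sum>i<n. w i * (ip d (X i) b - y i) * ip d (X i) u) = 0"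
    have "wrss n d X y w b \<le> wrss n d X y w b'" if "b' \<in> vecs d" for b'
    proof -
      define u where "u j = b' j - b j" for j
      have "u \<in> vecs d" using b that by (auto simp: vecs_def u_def)
      moreover have "b' = (\<lambda>j. b j + 1 * u j)" by (simp add: u_def)
      ultimately show ?thesis
        using grad curv_nonneg[of u] wrss_add_scaled[of n d X y w b 1 u] by simp
    qed
    then show "b \<in> OLS n d X y w"
      using b by (simp add: OLS_eq_wrss_min)
  qed
qed

lemma wrss_mono_weights:
  "\<forall>i<n. w i \<le> w' i \<Longrightarrow> wrss n d X y w \<beta> \<le> wrss n d X y w' \<beta>"
  unfolding wrss_def by (intro sum_mono mult_right_mono) auto

lemma wrss_scale_weights: "wrss n d X y (\<lambda>i. z * w i) \<beta> = z * wrss n d X y w \<beta>"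
  by (simp add: wrss_def sum_distrib_left mult.assoc)

lemma tendsto_wrss:
  assumes "(V \<longlongrightarrow> l) F"
  shows "((\<lambda>m. wrss n d X y (V m) \<beta>) \<longlongrightarrow> wrss n d X y l \<beta>) F"
  unfolding wrss_def by (intro tendsto_sum tendsto_mult_right tendsto_coordinate[OF assms])

lemma OLS_of_limit:
  assumes lim: "V \<longlonglongrightarrow> l" and V_nonneg: "\<And>m i. 0 \<le> V m i" and l_nonneg: "\<And>i. 0 \<le> l i"
    and B: "\<And>m. B m \<in> S" "\<And>m. B m \<in> OLS n d X y (V m)"
    and b: "b \<in> vecs d" "\<And>\<beta>. \<beta> \<in> S \<Longrightarrow> wrss n d X y l b \<le> wrss n d X y l \<beta>"
  shows "b \<in> OLS n d X y l"
proof -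
  have "wrss n d X y l b \<le> wrss n d X y l b'" if b': "b' \<in> vecs d" for b'
  proof (rule field_le_mult_one_interval)
    fix z :: real
    assume z: "0 < z" "z < 1"
    have "\<forall>\<^sub>F m in sequentially. z * l i \<le> V m i" for i
    proof (cases "l i = 0")
      case True
      then show ?thesis using V_nonneg by simp
    next
      case False
      then have "z * l i < l i" using l_nonneg[of i] z by simp
      from order_tendstoD(1)[OF tendsto_coordinate[OF lim] this] show ?thesis
        by (rule eventually_mono) simp
    qed
    then have "\<forall>\<^sub>F m in sequentially. \<forall>i\<in>{..<n}. z * l i \<le> V m i"
      by (intro eventually_ball_finite) auto
    then have "\<forall>\<^sub>F m in sequentially. z * wrss n d X y l b \<le> wrss n d X y (V m) b'"
    proof (rule eventually_mono)
      fix m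
      assume dominated: "\<forall>i\<in>{..<n}. z * l i \<le> V m i"
      have "z * wrss n d X y l b \<le> z * wrss n d X y l (B m)"
        using b(2)[OF B(1)] z by simp
      also have "\<dots> = wrss n d X y (\<lambda>i. z * l i) (B m)"
        by (simp add: wrss_scale_weights)
      also have "\<dots> \<le> wrss n d X y (V m) (B m)"
        using dominated by (intro wrss_mono_weights) auto
      also have "\<dots> \<le> wrss n d X y (V m) b'"
        using B(2)[of m] b' by (auto simp: OLS_eq_wrss_min)
      finally show "z * wrss n d X y l b \<le> wrss n d X y (V m) b'" .
    qed
    then show "z * wrss n d X y l b \<le> wrss n d X y l b'"
      by (rule tendsto_lowerbound[OF tendsto_wrss[OF lim]]) simp
  qed
  then show ?thesis
    using b(1) by (simp add: OLS_eq_wrss_min)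
qed

section \<open>Stability\<close>

lemma Stability_le_feasible:
  assumes "w \<in> weights n" "\<beta> \<in> OLS n d X y w" "\<beta> 0 = 0"
  shows "Stability n d X y \<le> ereal (real n - (\<Sum>i<n. w i))"
  unfolding Stability_def using assms by (intro Inf_lower) (auto simp: OLS_def)

lemma Stability_le_imp_near_feasible:
  assumes "Stability n d X y \<le> ereal k" "0 < e"
  shows "\<exists>w \<beta>. w \<in> weights n \<and> \<beta> \<in> OLS n d X y w \<and> \<beta> 0 = 0 \<and> real n - (\<Sum>i<n. w i) < k + e"
proof -
  have "Stability n d X y < ereal (k + e)"
    using assms by (simp add: le_less_trans)
  then show ?thesis
    unfolding Stability_def by (fastforce simp: Inf_less_iff)
qed

lemma exists_weight_gradient_zero:
  assumes cond: "\<forall>u\<in>vecs d. \<exists>w\<in>weights n. c \<le> (\<Sum>i<n. w i) \<and>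
      0 \<le> (\<Sum>i<n. w i * r i * ip d (X i) u)"
  shows "\<exists>w\<in>weights n. c \<le> (\<Sum>i<n. w i) \<and>
      (\<forall>u\<in>vecs d. (\<Sum>i<n. w i * r i * ip d (X i) u) = 0)"
proof -
  define K where "K = {w \<in> weights n. c \<le> (\<Sum>i<n. w i)}"
  define g where "g w = (\<lambda>j. \<Sum>i<n. w i * r i * X i j)" for w :: "nat \<Rightarrow> real"
  have grad: "(\<Sum>i<n. w i * r i * ip d (X i) u) = ip d u (g w)" for w u
    unfolding g_def by (rule sum_mult_ip)
  have "compact (g ` K)"
    unfolding K_def g_def
    by (intro compact_continuous_image compact_weights_sum_ge continuous_intros)
  moreover have "pointwise_convex (g ` K)"
  proof -
    have "(\<lambda>j. g a j + t * (g b j - g a j)) = g (\<lambda>i. a i + t * (b i - a i))" for a b t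
      unfolding g_def by (simp add: sum.distrib sum_distrib_left sum_subtractf algebra_simps)
    then show ?thesis
      using pointwise_convex_weights_sum_ge[of n c] unfolding pointwise_convex_def K_def by auto
  qed
  moreover have "\<forall>u\<in>vecs d. \<exists>c\<in>g ` K. 0 \<le> ip d u c"
    using cond unfolding K_def grad by auto
  ultimately obtain w where w: "w \<in> K" "\<forall>j<d. g w j = 0"
    using zero_mem_if_meets_all_halfspaces by blast
  then have "ip d u (g w) = 0" for u
    by (simp add: ip_def)
  with w(1) show ?thesis
    by (auto simp: K_def grad)
qed

lemma Stability_le_if_gradient_condition:
  assumes d: "d \<ge> 1" and lam: "lam \<in> vecs (d - 1)"
    and cond: "\<forall>u\<in>vecs d. \<exists>w\<in>weights n. real n - k \<le> (\<Sum>i<n. w i) \<and>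
        0 \<le> (\<Sum>i<n. w i * (ip (d - 1) (Xtilde d X i) lam - y i) * ip d (X i) u)"
  shows "Stability n d X y \<le> ereal k"
proof -
  obtain w where w: "w \<in> weights n" "real n - k \<le> (\<Sum>i<n. w i)"
    and grad: "\<forall>u\<in>vecs d. (\<Sum>i<n. w i * (ip (d - 1) (Xtilde d X i) lam - y i) * ip d (X i) u) = 0"
    using exists_weight_gradient_zero[OF cond] by blast
  have "prepend_zero lam \<in> OLS n d X y w"
    using OLS_iff_gradient_zero[of n w, OF _ prepend_zero_vecs[OF lam]] grad weights_nonneg[OF w(1)]
    by (simp add: ip_prepend_zero[OF d])
  then have "Stability n d X y \<le> ereal (real n - (\<Sum>i<n. w i))"
    using Stability_le_feasible[OF w(1)] by (simp add: prepend_zero_def)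
  also have "\<dots> \<le> ereal k"
    using w(2) by simp
  finally show ?thesis .
qed

lemma Stability_le_imp_convergent_feasible:
  assumes "Stability n d X y \<le> ereal k"
  obtains V l B where "V \<longlonglongrightarrow> l" "l \<in> weights n" "real n - k \<le> (\<Sum>i<n. l i)"
    "\<And>m. V m \<in> weights n" "\<And>m. B m \<in> OLS n d X y (V m)" "\<And>m. B m 0 = 0"
proof -
  have "\<forall>m. \<exists>w \<beta>. w \<in> weights n \<and> \<beta> \<in> OLS n d X y w \<and> \<beta> 0 = 0 \<and>
      real n - (\<Sum>i<n. w i) < k + inverse (real (Suc m))"
    using Stability_le_imp_near_feasible[OF assms] by simp
  then obtain W B where W: "\<And>m. W m \<in> weights n"
    and B: "\<And>m. B m \<in> OLS n d X y (W m)" "\<And>m. B m 0 = 0"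
    and near: "\<And>m. real n - (\<Sum>i<n. W m i) < k + inverse (real (Suc m))"
    by metis
  obtain l r where l: "l \<in> weights n" and r: "strict_mono r" and lim: "(W \<circ> r) \<longlonglongrightarrow> l"
    using seq_compactE[OF compact_imp_seq_compact[OF compact_weights]] W by metis
  have "real n - k \<le> (\<Sum>i<n. l i)"
  proof (rule LIMSEQ_le)
    have "(\<lambda>m. inverse (real (Suc (r m)))) \<longlonglongrightarrow> 0"
      using LIMSEQ_subseq_LIMSEQ[OF LIMSEQ_inverse_real_of_nat r] by (simp add: o_def)
    from tendsto_diff[OF tendsto_const this]
    show "(\<lambda>m. real n - k - inverse (real (Suc (r m)))) \<longlonglongrightarrow> real n - k"
      by simp
    show "(\<lambda>m. \<Sum>i<n. (W \<circ> r) m i) \<longlonglongrightarrow> (\<Sum>i<n. l i)"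
      by (intro tendsto_sum tendsto_coordinate[OF lim])
    show "\<exists>N. \<forall>m\<ge>N. real n - k - inverse (real (Suc (r m))) \<le> (\<Sum>i<n. (W \<circ> r) m i)"
      using near by (auto simp: algebra_simps less_imp_le)
  qed
  with lim l W B show ?thesis
    by (intro that[of "W \<circ> r" l "B \<circ> r"]) auto
qed

lemma gradient_condition_if_Stability_le:
  assumes d: "d \<ge> 1" and "Stability n d X y \<le> ereal k"
  shows "\<exists>lam\<in>vecs (d - 1). \<forall>u\<in>vecs d. \<exists>w\<in>weights n. real n - k \<le> (\<Sum>i<n. w i) \<and>
      0 \<le> (\<Sum>i<n. w i * (ip (d - 1) (Xtilde d X i) lam - y i) * ip d (X i) u)"
proof -
  obtain V l B where lim: "V \<longlonglongrightarrow> l" and l: "l \<in> weights n" "real n - k \<le> (\<Sum>i<n. l i)"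
    and V: "\<And>m. V m \<in> weights n" and B: "\<And>m. B m \<in> OLS n d X y (V m)" "\<And>m. B m 0 = 0"
    using Stability_le_imp_convergent_feasible[OF assms(2)] by metis
  obtain mu where mu: "mu \<in> OLS n (d - 1) (Xtilde d X) y l"
    using OLS_nonempty weights_nonneg[OF l(1)] by blast
  then have mu_vecs: "mu \<in> vecs (d - 1)"
    by (simp add: OLS_def)
  define S where "S = {\<beta> \<in> vecs d. \<beta> 0 = 0}"
  have "wrss n d X y l (prepend_zero mu) \<le> wrss n d X y l \<beta>" if "\<beta> \<in> S" for \<beta>
  proof -
    have "wrss n d X y l \<beta> = wrss n (d - 1) (Xtilde d X) y l (\<lambda>j. \<beta> (Suc j))"
      using that by (simp add: S_def wrss_def ip_split_first[OF d])
    moreover have "wrss n d X y l (prepend_zero mu) = wrss n (d - 1) (Xtilde d X) y l mu"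
      by (simp add: wrss_def ip_prepend_zero[OF d])
    ultimately show ?thesis
      using mu tail_vecs that by (auto simp: OLS_eq_wrss_min S_def)
  qed
  then have "prepend_zero mu \<in> OLS n d X y l"
    using B prepend_zero_vecs[OF mu_vecs]
    by (intro OLS_of_limit[OF lim, where B = B and S = S])
      (auto simp: S_def OLS_def weights_nonneg[OF l(1)] weights_nonneg[OF V])
  then have "\<forall>u\<in>vecs d. (\<Sum>i<n. l i * (ip (d - 1) (Xtilde d X i) mu - y i) * ip d (X i) u) = 0"
    using OLS_iff_gradient_zero[of n l, OF _ prepend_zero_vecs[OF mu_vecs]] weights_nonneg[OF l(1)]
    by (simp add: ip_prepend_zero[OF d])
  then have "\<forall>u\<in>vecs d. \<exists>w\<in>weights n. real n - k \<le> (\<Sum>i<n. w i) \<and>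
      0 \<le> (\<Sum>i<n. w i * (ip (d - 1) (Xtilde d X i) mu - y i) * ip d (X i) u)"
    using l by auto
  with mu_vecs show ?thesis
    by blast
qed

theorem lemma1:
  fixes n d :: nat and X :: "nat \<Rightarrow> nat \<Rightarrow> real" and y :: "nat \<Rightarrow> real" and k :: real
  assumes "d \<ge> 1" and "k \<ge> 0"
  shows "Stability n d X y \<le> ereal k \<longleftrightarrow>
    (\<exists>lam \<in> vecs (d - 1). \<forall>u \<in> vecs d. \<exists>w \<in> weights n.
        (\<Sum>i<n. w i) \<ge> real n - k \<and>
        (\<Sum>i<n. w i * (ip (d - 1) (Xtilde d X i) lam - y i) * ip d (X i) u) \<ge> 0)"
  using gradient_condition_if_Stability_le[OF assms(1)] Stability_le_if_gradient_condition[OF assms(1)]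
  by blast

end
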